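(* Let $\delta,\gamma\in(0,1)$, $b,d\in\mathbb N$ with $d\ge1$, and $n=b^{d-1}$. For $S\in\mathbb N$ let $\tilde S\sim\mathrm{Bin}(S,\gamma^{d-1})$ and, conditionally on $\tilde S$, let $X_1,\dots,X_{\tilde S}$ be i.i.d. uniform on $\{1,\dots,n\}$; set $mU=\min_{1\le i\le n}\sum_{s=1}^{\tilde S}\mathbb I(X_s=i)$. Define $t(T,d)=\min\{S\in\mathbb N:\ \Pr[mU\ge T]\ge1-\delta\}$. If $T\in\mathbb N$ satisfies $T\ge4\log\delta^{-1}+4\log2$, then \[t(T,d)\le16\left(\frac1\gamma\right)^{d-1}\log\left(2b^{d-1}\right)\cdot b^{d-1}T.\]
   Context: This quantifies how many iterations an algorithm exploring uniformly with probability $\gamma$ at every node of a tree with branching factor $b$ needs so that, with probability at least $1-\delta$, each of the $b^{d-1}$ nodes at depth $d$ (root at depth 1) is visited at least $T$ times; $\log$ is the natural logarithm. *)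

theory Defs
  imports "HOL-Probability.Probability"
begin

definition mU_pmf :: "real \<Rightarrow> nat \<Rightarrow> nat \<Rightarrow> nat \<Rightarrow> nat pmf" where
  "mU_pmf \<gamma> b d S =
     do { k \<leftarrow> binomial_pmf S (\<gamma> ^ (d - 1));
          xs \<leftarrow> replicate_pmf k (pmf_of_set {1..b ^ (d - 1)});
          return_pmf (Min ((\<lambda>i. count_list xs i) ` {1..b ^ (d - 1)})) }"

definition prob_mU_ge :: "real \<Rightarrow> nat \<Rightarrow> nat \<Rightarrow> nat \<Rightarrow> nat \<Rightarrow> real" where
  "prob_mU_ge \<gamma> b d T S = measure_pmf.prob (mU_pmf \<gamma> b d S) {m. T \<le> m}"

definition t_iter :: "real \<Rightarrow> real \<Rightarrow> nat \<Rightarrow> nat \<Rightarrow> nat \<Rightarrow> nat" where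
  "t_iter \<delta> \<gamma> b d T = (LEAST S. prob_mU_ge \<gamma> b d T S \<ge> 1 - \<delta>)"

end

theory Submission
  imports Defs "HOL-Analysis.Harmonic_Numbers"
begin

text \<open>
  If the minimal visit count is below \<open>T\<close>, some leaf \<open>i\<close> has count \<open>c\<^sub>i < T\<close>, so
  \<open>\<bbbP>[mU < T] \<le> \<Sum>\<^sub>i 2\<^sup>T \<bbbE>[(1/2)\<^bsup>c\<^sub>i\<^esup>]\<close> (union bound plus exponential Markov). The generating
  function of \<open>c\<^sub>i\<close> factorises over the i.i.d. uniform draws and then over the binomial
  thinning with parameter \<open>p = \<gamma>^(d-1)\<close>, which gives
  \<open>\<bbbP>[mU < T] \<le> n 2\<^sup>T (1 - p/(2n))\<^sup>S \<le> n 2\<^sup>T exp (- S p/(2n))\<close>; this is at most \<open>\<delta>\<close> as soon as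
  \<open>S \<ge> 16 n log (2n) T / p - 1\<close>.
\<close>

lemma nn_integral_if_eq_measure_pmf:
  assumes "0 \<le> a"
  shows "(\<integral>\<^sup>+x. ennreal (if x = i then a else 1) \<partial>measure_pmf q) = ennreal (1 - pmf q i + pmf q i * a)"
proof -
  have "(\<integral>\<^sup>+x. ennreal (if x = i then a else 1) \<partial>measure_pmf q)
      = (\<integral>\<^sup>+x. ennreal a * indicator {i} x + indicator (- {i}) x \<partial>measure_pmf q)"
    by (intro nn_integral_cong) (auto split: split_indicator)
  also have "\<dots> = ennreal a * pmf q i + emeasure q (- {i})"
    by (simp add: nn_integral_add nn_integral_cmult emeasure_pmf_single)
  also have "emeasure q (- {i}) = 1 - pmf q i"
    using measure_pmf.prob_compl[of "{i}" q]
    by (simp add: measure_pmf.emeasure_eq_measure measure_pmf_single Compl_eq_Diff_UNIV)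
  finally show ?thesis
    using assms pmf_le_1[of q i]
    by (simp add: ennreal_mult[symmetric] ennreal_plus[symmetric] mult.commute del: ennreal_plus)
qed

lemma nn_integral_replicate_pmf_power_count_list:
  assumes "0 \<le> a"
  shows "(\<integral>\<^sup>+xs. ennreal (a ^ count_list xs i) \<partial>measure_pmf (replicate_pmf k q))
     = ennreal ((1 - pmf q i + pmf q i * a) ^ k)"
proof (induction k)
  case (Suc k)
  have "(\<integral>\<^sup>+xs. ennreal (a ^ count_list xs i) \<partial>measure_pmf (replicate_pmf (Suc k) q))
      = (\<integral>\<^sup>+x. ennreal (if x = i then a else 1) *
           (\<integral>\<^sup>+xs. ennreal (a ^ count_list xs i) \<partial>measure_pmf (replicate_pmf k q)) \<partial>measure_pmf q)"
    using assms
    by (simp add: nn_integral_cmult[symmetric] ennreal_mult'[symmetric]; intro nn_integral_cong; simp)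
  also have "\<dots> = ennreal (1 - pmf q i + pmf q i * a) * ennreal ((1 - pmf q i + pmf q i * a) ^ k)"
    by (simp add: Suc nn_integral_multc nn_integral_if_eq_measure_pmf assms)
  moreover have "0 \<le> 1 - pmf q i + pmf q i * a"
    using assms pmf_le_1[of q i] by simp
  ultimately show ?case by (simp add: ennreal_mult del: ennreal_plus)
qed simp

lemma nn_integral_binomial_pmf_power:
  assumes "p \<in> {0..1}" "0 \<le> m"
  shows "(\<integral>\<^sup>+k. ennreal (m ^ k) \<partial>measure_pmf (binomial_pmf S p)) = ennreal ((1 - p + p * m) ^ S)"
proof -
  have "(\<integral>\<^sup>+k. ennreal (m ^ k) \<partial>measure_pmf (binomial_pmf S p))
      = ennreal (\<Sum>k\<le>S. real (S choose k) * p ^ k * (1 - p) ^ (S - k) * m ^ k)"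
    using assms by (simp add: nn_integral_eq_integral expectation_binomial_pmf')
  also have "(\<Sum>k\<le>S. real (S choose k) * p ^ k * (1 - p) ^ (S - k) * m ^ k) = (p * m + (1 - p)) ^ S"
    by (simp add: binomial_ring power_mult_distrib mult_ac)
  finally show ?thesis by (simp add: add.commute)
qed

lemma indicator_Min_less_le_sum:
  assumes "finite A" "A \<noteq> {}"
  shows "(indicator {m. m < T} (Min (f ` A)) :: ennreal) \<le> ennreal (\<Sum>i\<in>A. 2 ^ T * (1/2) ^ f i)"
proof (cases "Min (f ` A) < T")
  case True
  have "Min (f ` A) \<in> f ` A"
    using assms by simp
  then obtain i where i: "i \<in> A" "f i = Min (f ` A)"
    by (metis imageE)
  have "(2::real) ^ T = 2 ^ f i * 2 ^ (T - f i)"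
    using True i by (simp flip: power_add)
  then have "(1::real) \<le> 2 ^ T * (1/2) ^ f i"
    by (simp add: power_one_over)
  also have "\<dots> \<le> (\<Sum>i\<in>A. 2 ^ T * (1/2) ^ f i)"
    using assms i by (intro member_le_sum) auto
  finally show ?thesis using True by simp
qed simp

lemma emeasure_replicate_pmf_Min_count_list_less:
  assumes "finite A" "A \<noteq> {}"
  shows "emeasure (replicate_pmf k (pmf_of_set A)) {xs. Min ((\<lambda>i. count_list xs i) ` A) < T}
    \<le> ennreal (real (card A) * 2 ^ T * (1 - 1 / (2 * real (card A))) ^ k)"
proof -
  have n: "real (card A) \<ge> 1"
    using assms by (simp add: Suc_leI card_gt_0_iff)
  have "emeasure (replicate_pmf k (pmf_of_set A)) {xs. Min ((\<lambda>i. count_list xs i) ` A) < T}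
      = (\<integral>\<^sup>+xs. indicator {m. m < T} (Min ((\<lambda>i. count_list xs i) ` A)) \<partial>measure_pmf (replicate_pmf k (pmf_of_set A)))"
    by (simp flip: nn_integral_indicator add: indicator_def)
  also have "\<dots> \<le> (\<integral>\<^sup>+xs. (\<Sum>i\<in>A. ennreal (2 ^ T) * ennreal ((1/2) ^ count_list xs i))
      \<partial>measure_pmf (replicate_pmf k (pmf_of_set A)))"
    using assms indicator_Min_less_le_sum
    by (intro nn_integral_mono) (simp add: sum_ennreal[symmetric] ennreal_mult)
  also have "\<dots> = (\<Sum>i\<in>A. ennreal (2 ^ T) * ennreal ((1 - 1 / (2 * real (card A))) ^ k))"
    using assms by (simp add: nn_integral_sum nn_integral_cmult nn_integral_replicate_pmf_power_count_list)
  also have "\<dots> = ennreal (real (card A) * 2 ^ T * (1 - 1 / (2 * real (card A))) ^ k)"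
    using n by (simp add: ennreal_mult[symmetric] ennreal_of_nat_eq_real_of_nat mult.assoc)
  finally show ?thesis .
qed

lemma prob_mU_less_le:
  assumes "0 \<le> \<gamma>" "\<gamma> \<le> 1" "1 \<le> b"
  shows "measure_pmf.prob (mU_pmf \<gamma> b d S) {m. m < T}
    \<le> real (b ^ (d - 1)) * 2 ^ T * (1 - \<gamma> ^ (d - 1) / (2 * real (b ^ (d - 1)))) ^ S"
proof -
  define n where "n = b ^ (d - 1)"
  define p where "p = \<gamma> ^ (d - 1)"
  have n: "real n \<ge> 1"
    unfolding n_def using assms by simp
  have p: "p \<in> {0..1}"
    unfolding p_def using assms by (simp add: power_le_one)
  have "emeasure (mU_pmf \<gamma> b d S) {m. m < T}
      = (\<integral>\<^sup>+k. emeasure (replicate_pmf k (pmf_of_set {1..n}))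
          {xs. Min ((\<lambda>i. count_list xs i) ` {1..n}) < T} \<partial>measure_pmf (binomial_pmf S p))"
    unfolding mU_pmf_def n_def p_def map_pmf_def[symmetric] by (simp add: vimage_def)
  also have "\<dots> \<le> (\<integral>\<^sup>+k. ennreal (real n * 2 ^ T) * ennreal ((1 - 1 / (2 * real n)) ^ k)
      \<partial>measure_pmf (binomial_pmf S p))"
    using emeasure_replicate_pmf_Min_count_list_less[of "{1..n}"] n
    by (intro nn_integral_mono) (simp add: ennreal_mult[symmetric])
  also have "\<dots> = ennreal (real n * 2 ^ T) * ennreal ((1 - p + p * (1 - 1 / (2 * real n))) ^ S)"
    using p n by (simp add: nn_integral_cmult nn_integral_binomial_pmf_power)
  also have "1 - p + p * (1 - 1 / (2 * real n)) = 1 - p / (2 * real n)"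
    by (simp add: field_simps)
  finally have "emeasure (mU_pmf \<gamma> b d S) {m. m < T}
      \<le> ennreal (real n * 2 ^ T * (1 - p / (2 * real n)) ^ S)"
    using p n by (simp add: ennreal_mult)
  moreover have "0 \<le> 1 - p / (2 * real n)"
    using p n by (simp add: field_simps)
  ultimately show ?thesis
    unfolding n_def p_def by (simp add: measure_pmf.emeasure_eq_measure)
qed

lemma tail_estimate_le_delta:
  fixes \<delta> N P :: real and S T :: nat
  assumes "0 < \<delta>" "\<delta> < 1" "1 \<le> N" "0 < P" "P \<le> 1"
    and T: "real T \<ge> 4 * ln (1 / \<delta>) + 4 * ln 2"
    and S: "real S \<ge> 16 * (1 / P) * ln (2 * N) * N * real T - 1"
  shows "N * 2 ^ T * (1 - P / (2 * N)) ^ S \<le> \<delta>"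
proof -
  define x where "x = P / (2 * N)"
  define l where "l = ln (2::real)"
  have x: "0 < x" "x \<le> 1/2"
    unfolding x_def using assms by (simp_all add: field_simps)
  have l: "2/3 \<le> l"
    unfolding l_def by (rule ln2_ge_two_thirds)
  have "0 < ln (1 / \<delta>)"
    using assms by simp
  then have "0 < real T"
    using T l unfolding l_def by linarith
  then have T1: "1 \<le> real T"
    by simp
  have "ln (2 * N) = l + ln N"
    unfolding l_def using assms by (simp add: ln_mult)
  then have "(16 * (1 / P) * ln (2 * N) * N * real T - 1) * x
      = 8 * (real T * l) + 8 * (real T * ln N) - x"
    unfolding x_def using assms by (simp add: field_simps)
  then have Sx: "real S * x \<ge> 8 * (real T * l) + 8 * (real T * ln N) - 1/2"
    using mult_right_mono[OF S, of x] x by linarith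
  have "0 \<le> ln N"
    using assms by simp
  then have "ln N \<le> 8 * (real T * ln N)"
    using mult_right_mono[of 1 "8 * real T" "ln N"] T1 by simp
  moreover have "ln \<delta> \<ge> l - real T / 4"
    using assms unfolding l_def by (simp add: ln_div)
  moreover have "real T * l \<ge> 2/3 * real T"
    using l T1 by (simp add: mult.commute mult_right_mono)
  ultimately have key: "ln N + real T * l - real S * x \<le> ln \<delta>"
    using Sx l T1 by linarith
  have "(1 - x) ^ S \<le> exp (- x) ^ S"
    using x by (intro power_mono) (auto simp: exp_ge_add_one_self[of "- x", simplified])
  then have "N * 2 ^ T * (1 - x) ^ S \<le> N * 2 ^ T * exp (- (real S * x))"
    using assms by (simp add: exp_of_nat_mult[symmetric])
  also have "\<dots> = exp (ln N + real T * l - real S * x)"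
    using assms by (simp add: exp_add exp_diff exp_minus exp_of_nat_mult l_def field_simps)
  also have "\<dots> \<le> \<delta>"
    using key assms by (metis exp_le_cancel_iff exp_ln)
  finally show ?thesis
    unfolding x_def .
qed

lemma prob_mU_ge_eq:
  "prob_mU_ge \<gamma> b d T S = 1 - measure_pmf.prob (mU_pmf \<gamma> b d S) {m. m < T}"
proof -
  have "{m. T \<le> m} = UNIV - {m. m < T}"
    by auto
  then show ?thesis
    unfolding prob_mU_ge_def
    using measure_pmf.prob_compl[of "{m. m < T}" "mU_pmf \<gamma> b d S"] by simp
qed

theorem lemma6:
  fixes \<delta> \<gamma> :: real and b d T :: nat
  assumes "0 < \<delta>" "\<delta> < 1" "0 < \<gamma>" "\<gamma> < 1" "1 \<le> b" "1 \<le> d"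
    and "real T \<ge> 4 * ln (1 / \<delta>) + 4 * ln 2"
  shows "(\<exists>S. prob_mU_ge \<gamma> b d T S \<ge> 1 - \<delta>) \<and>
    real (t_iter \<delta> \<gamma> b d T)
      \<le> 16 * (1 / \<gamma>) ^ (d - 1) * ln (2 * real b ^ (d - 1)) * real b ^ (d - 1) * real T"
proof -
  define N where "N = real b ^ (d - 1)"
  define P where "P = \<gamma> ^ (d - 1)"
  define B where "B = 16 * (1 / P) * ln (2 * N) * N * real T"
  define S where "S = nat \<lfloor>B\<rfloor>"
  have N: "1 \<le> N" and P: "0 < P" "P \<le> 1"
    unfolding N_def P_def using assms by (auto intro: power_le_one)
  then have "0 \<le> B"
    unfolding B_def by simp
  then have S: "real S \<le> B" "B - 1 \<le> real S"
    unfolding S_def by linarith+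
  have "measure_pmf.prob (mU_pmf \<gamma> b d S) {m. m < T} \<le> N * 2 ^ T * (1 - P / (2 * N)) ^ S"
    using prob_mU_less_le[of \<gamma> b d S T] assms unfolding N_def P_def by simp
  also have "\<dots> \<le> \<delta>"
    using tail_estimate_le_delta[of \<delta> N P T S] assms N P S unfolding B_def by simp
  finally have good: "prob_mU_ge \<gamma> b d T S \<ge> 1 - \<delta>"
    by (simp add: prob_mU_ge_eq)
  then have "t_iter \<delta> \<gamma> b d T \<le> S"
    unfolding t_iter_def by (rule Least_le)
  with good S show ?thesis
    unfolding B_def N_def P_def by (auto simp: power_one_over)
qed

end
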